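(* Let $q\ge2$, $n\ge1$, $\tau\ge0$, and let $m$ be an integer with $m\in[n-\tau n,n+\tau n]$. Let $\mathbf r\in R_q(m)$ be a constant word and suppose $\kappa^\ast=\frac{\tau n+n-m}{2n}\le\frac{q-1}{q}$. Then $$|\mathcal{B}(\mathbf r,\tau n)\cap\Sigma_q^n|=q^{n\left(H_q(\kappa^\ast)+O\left(\frac{\log_q n}{n}\right)\right)}.$$
   Context: $\Sigma_q$ is a finite alphabet of size $q$. $R_q(m)=\{(\alpha,\alpha,\dots,\alpha)\in\Sigma_q^m:\alpha\in\Sigma_q\}$. The insdel distance $d(\mathbf a,\mathbf b)$ between words (lengths may differ) is the minimum number of single-symbol insertions and deletions needed to transform $\mathbf a$ into $\mathbf b$. For $\mathbf u\in\Sigma_q^m$ and real $z\ge0$, $\mathcal{B}(\mathbf u,z)=\{\mathbf v\in\bigcup_{i=\max\{m-z,0\}}^{m+z}\Sigma_q^i: d(\mathbf u,\mathbf v)\le z\}$. $H_q(x)=x\log_q(q-1)-x\log_qx-(1-x)\log_q(1-x)$ for $0<x<1$, $H_q(0)=H_q(1)=0$. *)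

theory Defs
  imports Complex_Main
begin

text \<open>Alphabet Sigma_q is modelled as the naturals below q; words are lists.\<close>

definition words :: "nat \<Rightarrow> nat \<Rightarrow> nat list set" where
  "words q n = {v. length v = n \<and> set v \<subseteq> {..<q}}"

definition const_words :: "nat \<Rightarrow> nat \<Rightarrow> nat list set" where
  "const_words q m = {replicate m a | a. a < q}"

definition insdel_step :: "nat list \<Rightarrow> nat list \<Rightarrow> bool" where
  "insdel_step a b \<longleftrightarrow>
     (\<exists>xs y ys. a = xs @ y # ys \<and> b = xs @ ys) \<or>
     (\<exists>xs y ys. b = xs @ y # ys \<and> a = xs @ ys)"

definition insdel_dist :: "nat list \<Rightarrow> nat list \<Rightarrow> nat" where
  "insdel_dist a b = (LEAST k. (insdel_step ^^ k) a b)"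

definition insdel_ball :: "nat \<Rightarrow> nat list \<Rightarrow> real \<Rightarrow> nat list set" where
  "insdel_ball q u z = {v. set v \<subseteq> {..<q} \<and>
      max (real (length u) - z) 0 \<le> real (length v) \<and> real (length v) \<le> real (length u) + z \<and>
      real (insdel_dist u v) \<le> z}"

definition Hq :: "nat \<Rightarrow> real \<Rightarrow> real" where
  "Hq q x = (if x = 0 \<or> x = 1 then 0 else
     x * log (real q) (real q - 1) - x * log (real q) x - (1 - x) * log (real q) (1 - x))"

end

theory Submission
  imports Defs
begin

text \<open>
  The insertion/deletion distance from a word v to the constant word a^m is the number of symbols
  of v other than a plus |#a(v) - m|: delete the other symbols, then adjust the run of a's;
  conversely, this quantity changes by at most one per step. Among the words of length n the ball
  is therefore the Hamming ball of radius y = kappa* n around a^n. Its size is at most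
  exp (n H(kappa*)), with H the q-ary entropy in nats: the weights
  (1 - kappa)^#a(v) (kappa / (q - 1))^(n - #a(v)) form a probability distribution on words, and
  when kappa \<le> (q - 1) / q every word of the ball weighs at least exp (- n H(kappa)). Its size is
  at least C(n, j) (q - 1)^j for j = floor y, and C(n, j) j^j (n - j)^(n - j) is the largest of the
  n + 1 terms in the binomial expansion of n^n = (j + (n - j))^n, so this is at least
  exp (n H(j / n)) / (n + 1). Passing from j to y costs O(log n).
\<close>

section \<open>Insertion/deletion distance to a constant word\<close>

lemma relpowp_map:
  assumes "\<And>x y. R x y \<Longrightarrow> S (f x) (f y)" and "(R ^^ k) x y"
  shows "(S ^^ k) (f x) (f y)"
  using assms(2)
proof (induction k arbitrary: y)
  case (Suc k)
  then obtain z where "(R ^^ k) x z" "R z y" by (auto elim: relpowp_Suc_E)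
  with Suc.IH assms(1) show ?case by (blast intro: relpowp_Suc_I)
qed simp

lemma relpowp_potential_le:
  fixes f :: "'a \<Rightarrow> nat"
  assumes "\<And>x y. R x y \<Longrightarrow> f y \<le> f x + 1" and "(R ^^ k) x y"
  shows "f y \<le> f x + k"
  using assms(2)
proof (induction k arbitrary: y)
  case (Suc k)
  then obtain z where "(R ^^ k) x z" "R z y" by (auto elim: relpowp_Suc_E)
  with Suc.IH[of z] assms(1)[of z y] show ?case by simp
qed simp

lemma insdel_step_sym: "insdel_step u v \<Longrightarrow> insdel_step v u"
  unfolding insdel_step_def by blast

lemma insdel_step_Cons: "insdel_step u v \<Longrightarrow> insdel_step (x # u) (x # v)"
  unfolding insdel_step_def by (metis append_Cons)

lemma insdel_step_drop_hd: "insdel_step (x # u) u"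
  unfolding insdel_step_def by (metis append_Nil)

lemma insdel_path_sym: "(insdel_step ^^ k) u v \<Longrightarrow> (insdel_step ^^ k) v u"
proof (induction k arbitrary: v)
  case (Suc k)
  then obtain w where "(insdel_step ^^ k) u w" "insdel_step w v" by (auto elim: relpowp_Suc_E)
  with Suc.IH show ?case by (metis insdel_step_sym relpowp_Suc_I2)
qed simp

lemma insdel_dist_eqI:
  assumes "(insdel_step ^^ d) u v" and "\<And>k. (insdel_step ^^ k) u v \<Longrightarrow> d \<le> k"
  shows "insdel_dist u v = d"
  unfolding insdel_dist_def using assms by (blast intro: Least_equality)

definition mismatches :: "nat \<Rightarrow> nat list \<Rightarrow> nat" where
  "mismatches a w = length (filter (\<lambda>x. x \<noteq> a) w)"

lemma count_list_add_mismatches: "count_list w a + mismatches a w = length w"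
  by (induction w) (auto simp: mismatches_def)

lemma count_list_replicate_self [simp]: "count_list (replicate m a) a = m"
  by (induction m) auto

lemma insdel_path_filter: "(insdel_step ^^ mismatches a w) w (replicate (count_list w a) a)"
proof (induction w)
  case (Cons x w)
  show ?case
  proof (cases "x = a")
    case True
    with relpowp_map[where f = "Cons x" and R = insdel_step and S = insdel_step,
        OF insdel_step_Cons Cons.IH]
    show ?thesis by (simp add: mismatches_def)
  next
    case False
    with relpowp_Suc_I2[OF insdel_step_drop_hd Cons.IH] show ?thesis
      by (simp add: mismatches_def)
  qed
qed (simp add: mismatches_def)

lemma insdel_path_replicate: "(insdel_step ^^ d) (replicate (m + d) a) (replicate m a)"
proof (induction d)
  case (Suc d)
  then show ?case using insdel_step_drop_hd relpowp_Suc_I2 by (metis add_Suc_right replicate_Suc)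
qed simp

lemma insdel_dist_replicate:
  "insdel_dist (replicate m a) v = mismatches a v + (count_list v a - m) + (m - count_list v a)"
proof (rule insdel_dist_eqI)
  let ?c = "count_list v a"
  have "(insdel_step ^^ ((?c - m) + (m - ?c))) (replicate ?c a) (replicate m a)"
  proof (cases "m \<le> ?c")
    case True
    then show ?thesis using insdel_path_replicate[of "?c - m" m a] by simp
  next
    case False
    then show ?thesis using insdel_path_sym[OF insdel_path_replicate[of "m - ?c" ?c a]] by simp
  qed
  with insdel_path_filter[of a v] show
    "(insdel_step ^^ (mismatches a v + (?c - m) + (m - ?c))) (replicate m a) v"
    by (metis insdel_path_sym relpowp_trans add.assoc)
next
  fix k assume path: "(insdel_step ^^ k) (replicate m a) v"
  define \<phi> where "\<phi> w = mismatches a w + (count_list w a - m) + (m - count_list w a)" for w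
  have "\<phi> w' \<le> \<phi> w + 1" if "insdel_step w w'" for w w'
    using that unfolding insdel_step_def \<phi>_def mismatches_def by auto
  from relpowp_potential_le[where f = \<phi>, OF this path] show "\<phi> v \<le> k"
    by (simp add: \<phi>_def mismatches_def)
qed

lemma insdel_ball_replicate_inter_words:
  assumes "real n - z \<le> real m" and "real m \<le> real n + z"
  shows "insdel_ball q (replicate m a) z \<inter> words q n =
    {v \<in> words q n. 2 * real (mismatches a v) \<le> z + real n - real m}"
proof -
  have "real (insdel_dist (replicate m a) v) \<le> z \<longleftrightarrow>
      2 * real (mismatches a v) \<le> z + real n - real m"
    if "length v = n" for v
  proof -
    have "real (count_list v a) = real n - real (mismatches a v)"
      using count_list_add_mismatches[of v a] that by simp
    then show ?thesis
      unfolding insdel_dist_replicate using assms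
      by (cases "m \<le> count_list v a") (auto simp: of_nat_diff)
  qed
  then show ?thesis
    using assms unfolding insdel_ball_def words_def by auto
qed

section \<open>Counting words by the number of mismatches\<close>

lemma finite_words: "finite (words q n)"
  unfolding words_def using finite_lists_length_eq[of "{..<q}" n] by (simp add: conj_commute)

lemma words_Suc: "words q (Suc n) = (\<lambda>(x, v). x # v) ` ({..<q} \<times> words q n)"
  unfolding words_def by (force simp: length_Suc_conv)

lemma sum_words_prod_list:
  fixes g :: "nat \<Rightarrow> 'a :: comm_semiring_1"
  shows "(\<Sum>v\<in>words q n. prod_list (map g v)) = (\<Sum>x<q. g x) ^ n"
proof (induction n)
  case 0
  have "words q 0 = {[]}" unfolding words_def by auto
  then show ?case by simp
next
  case (Suc n)
  have inj: "inj_on (\<lambda>(x, v). x # v) ({..<q} \<times> words q n)" by (auto simp: inj_on_def)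
  have "(\<Sum>v\<in>words q (Suc n). prod_list (map g v)) =
      (\<Sum>(x, v)\<in>{..<q} \<times> words q n. g x * prod_list (map g v))"
    unfolding words_Suc sum.reindex[OF inj] by (rule sum.cong) auto
  also have "\<dots> = (\<Sum>x<q. g x) * (\<Sum>v\<in>words q n. prod_list (map g v))"
    by (simp add: sum_product sum.cartesian_product)
  finally show ?case using Suc.IH by simp
qed

lemma card_words_mismatches_eq:
  assumes "a < q"
  shows "card {v \<in> words q n. mismatches a v = j} = (n choose j) * (q - 1) ^ j"
proof (induction n arbitrary: j)
  case 0
  have "{v \<in> words q 0. mismatches a v = j} = (if j = 0 then {[]} else {})"
    by (auto simp: words_def mismatches_def)
  then show ?case by simp
next
  case (Suc n)
  let ?M = "\<lambda>j. {v \<in> words q n. mismatches a v = j}"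
  let ?T = "(\<lambda>(x, v). x # v) ` (({..<q} - {a}) \<times> {v \<in> words q n. Suc (mismatches a v) = j})"
  have "{v \<in> words q (Suc n). mismatches a v = j} = Cons a ` ?M j \<union> ?T"
    using assms by (auto simp: words_Suc mismatches_def image_iff)
  moreover have "Cons a ` ?M j \<inter> ?T = {}" by auto
  moreover have "card (Cons a ` ?M j) = (n choose j) * (q - 1) ^ j"
    using Suc.IH by (simp add: card_image)
  moreover have "card ?T = (q - 1) * card {v \<in> words q n. Suc (mismatches a v) = j}"
    using assms by (subst card_image) (auto simp: inj_on_def card_cartesian_product)
  moreover have "finite ?T" "finite (Cons a ` ?M j)" by (simp_all add: finite_words)
  ultimately have card: "card {v \<in> words q (Suc n). mismatches a v = j} =
      (n choose j) * (q - 1) ^ j + (q - 1) * card {v \<in> words q n. Suc (mismatches a v) = j}"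
    by (simp add: card_Un_disjoint)
  show ?case
  proof (cases j)
    case (Suc i)
    then show ?thesis
      unfolding card using Suc.IH[of i] by (simp add: add_mult_distrib add_mult_distrib2 mult_ac)
  qed (use card in simp)
qed

definition entropy_ln :: "nat \<Rightarrow> real \<Rightarrow> real" where
  "entropy_ln q x = x * ln (real q - 1) - x * ln x - (1 - x) * ln (1 - x)"

lemma Hq_eq_entropy_ln: "x \<noteq> 1 \<Longrightarrow> Hq q x = entropy_ln q x / ln (real q)"
  by (auto simp: Hq_def entropy_ln_def log_def diff_divide_distrib)

lemma entropy_weight_ge:
  assumes "2 \<le> q" and "0 \<le> \<kappa>" and "\<kappa> \<le> (real q - 1) / real q"
    and "k \<le> n" and "real k \<le> \<kappa> * real n"
  shows "exp (- (real n * entropy_ln q \<kappa>)) \<le> (1 - \<kappa>) ^ (n - k) * (\<kappa> / (real q - 1)) ^ k"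
proof (cases "\<kappa> = 0")
  case True
  with assms show ?thesis by (simp add: entropy_ln_def)
next
  case False
  define r where "r = \<kappa> / (real q - 1)"
  have q1: "real q - 1 > 0" using assms(1) by simp
  have "(real q - 1) / real q < 1" using assms(1) by simp
  with assms(3) have "\<kappa> < 1" by linarith
  \<comment> \<open>Since \<open>r \<le> 1 - \<kappa>\<close>, the weight decreases in \<open>k\<close>;
    at \<open>k = \<kappa> n\<close> it is exactly \<open>exp (- n H(\<kappa>))\<close>.\<close>
  have r: "0 < r" "r \<le> 1 - \<kappa>"
    using False assms(2,3) q1 by (auto simp: r_def field_simps)
  have "- (real n * entropy_ln q \<kappa>) =
      real (n - k) * ln (1 - \<kappa>) + real k * ln r - (\<kappa> * real n - real k) * (ln (1 - \<kappa>) - ln r)"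
    using False assms(2,4) q1 by (simp add: entropy_ln_def r_def ln_div of_nat_diff algebra_simps)
  also have "\<dots> \<le> real (n - k) * ln (1 - \<kappa>) + real k * ln r"
    using assms(5) r by simp
  also have "\<dots> = ln ((1 - \<kappa>) ^ (n - k) * r ^ k)"
    using r \<open>\<kappa> < 1\<close> by (simp add: ln_mult ln_realpow)
  finally show ?thesis
    using r \<open>\<kappa> < 1\<close> by (simp add: r_def ln_ge_iff)
qed

lemma card_mismatches_le_entropy:
  assumes "a < q" and "2 \<le> q" and "0 \<le> \<kappa>" and "\<kappa> \<le> (real q - 1) / real q"
  shows "real (card {v \<in> words q n. real (mismatches a v) \<le> \<kappa> * real n})
    \<le> exp (real n * entropy_ln q \<kappa>)"
proof -
  define S where "S = {v \<in> words q n. real (mismatches a v) \<le> \<kappa> * real n}"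
  define g where "g x = (if x = a then 1 - \<kappa> else \<kappa> / (real q - 1))" for x
  have q1: "real q - 1 > 0" using assms(2) by simp
  have "(real q - 1) / real q < 1" using assms(2) by simp
  with assms(4) have "\<kappa> < 1" by linarith
  have prod_g: "prod_list (map g v) =
      (1 - \<kappa>) ^ count_list v a * (\<kappa> / (real q - 1)) ^ mismatches a v" for v
    by (induction v) (auto simp: g_def mismatches_def)
  have "(\<Sum>x<q. g x) = g a + (\<Sum>x\<in>{..<q} - {a}. g x)"
    using assms(1) by (simp add: sum.remove)
  also have "\<dots> = 1"
    using assms(1) q1 by (simp add: g_def card_Diff_singleton of_nat_diff)
  finally have sum_g: "(\<Sum>x<q. g x) = 1" .
  have "real (card S) * exp (- (real n * entropy_ln q \<kappa>)) \<le> (\<Sum>v\<in>S. prod_list (map g v))"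
  proof (rule sum_bounded_below[where K = "exp (- (real n * entropy_ln q \<kappa>))", simplified])
    fix v assume "v \<in> S"
    then have len: "length v = n" and "real (mismatches a v) \<le> \<kappa> * real n"
      by (auto simp: S_def words_def)
    moreover have "count_list v a = n - mismatches a v" "mismatches a v \<le> n"
      using count_list_add_mismatches[of v a] len by auto
    ultimately show "exp (- (real n * entropy_ln q \<kappa>)) \<le> prod_list (map g v)"
      unfolding prod_g using entropy_weight_ge[OF assms(2-4)] by simp
  qed
  also have "\<dots> \<le> (\<Sum>v\<in>words q n. prod_list (map g v))"
    using \<open>\<kappa> < 1\<close> assms(3) q1
    by (intro sum_mono2 finite_words) (auto simp: S_def prod_g)
  also have "\<dots> = 1" by (simp add: sum_words_prod_list sum_g)
  finally show ?thesis by (simp add: S_def exp_minus field_simps)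
qed

section \<open>Binomial and entropy estimates\<close>

lemma binomial_term_Suc:
  assumes "i < n"
  shows "real (n choose Suc i) * x ^ Suc i * y ^ (n - Suc i) * (real (Suc i) * y) =
    real (n choose i) * x ^ i * y ^ (n - i) * (x * real (n - i))"
proof -
  have "Suc i * (n choose Suc i) = (n - i) * (n choose i)"
    using binomial_absorption[of i n] binomial_absorb_comp[of n i] by simp
  then have binom: "real (Suc i) * real (n choose Suc i) = real (n - i) * real (n choose i)"
    by (metis of_nat_mult)
  have pow: "y ^ (n - Suc i) * y = y ^ (n - i)"
    using assms by (simp flip: power_Suc2 add: Suc_diff_Suc)
  have "real (n choose Suc i) * x ^ Suc i * y ^ (n - Suc i) * (real (Suc i) * y) =
      (real (Suc i) * real (n choose Suc i)) * x ^ i * x * (y ^ (n - Suc i) * y)"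
    by (simp add: mult_ac)
  also have "\<dots> = (real (n - i) * real (n choose i)) * x ^ i * x * y ^ (n - i)"
    by (simp only: binom pow)
  finally show ?thesis by (simp add: mult_ac)
qed

lemma binomial_term_le_mode:
  assumes "j < n"
  shows "real (n choose i) * real j ^ i * real (n - j) ^ (n - i) \<le>
    real (n choose j) * real j ^ j * real (n - j) ^ (n - j)"
proof -
  define T where "T i = real (n choose i) * real j ^ i * real (n - j) ^ (n - i)" for i
  have rec: "T (Suc i) * (real (Suc i) * real (n - j)) = T i * (real j * real (n - i))"
    if "i < n" for i
    unfolding T_def using binomial_term_Suc[OF that] .
  have nonneg: "0 \<le> T i" for i by (simp add: T_def)
  have pos: "0 < real (Suc i) * real (n - j)" for i using assms by simp
  have up: "T i \<le> T (Suc i)" if "i < j" for i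
  proof -
    have "T i * (real (Suc i) * real (n - j)) \<le> T i * (real j * real (n - i))"
      using that by (intro mult_left_mono[OF _ nonneg] mult_mono) auto
    also have "\<dots> = T (Suc i) * (real (Suc i) * real (n - j))"
      using rec[of i] that assms by simp
    finally show ?thesis using pos by (simp only: mult_le_cancel_right_pos)
  qed
  have down: "T (Suc i) \<le> T i" if "j \<le> i" for i
  proof (cases "i < n")
    case True
    have "T (Suc i) * (real (Suc i) * real (n - j)) = T i * (real j * real (n - i))"
      using rec[OF True] .
    also have "\<dots> \<le> T i * (real (Suc i) * real (n - j))"
      using that by (intro mult_left_mono[OF _ nonneg] mult_mono) auto
    finally show ?thesis using pos by (simp only: mult_le_cancel_right_pos)
  qed (simp add: T_def binomial_eq_0)
  show ?thesis
  proof (cases "i \<le> j")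
    case True
    have "T (min i j) \<le> T (min j j)"
      by (rule lift_Suc_mono_le[OF _ True]) (simp add: up min_def not_less_eq_eq[symmetric])
    then show ?thesis using True by (simp add: T_def)
  next
    case False
    have "T (max i j) \<le> T (max j j)"
    proof (rule lift_Suc_antimono_le[of "\<lambda>i. T (max i j)"])
      show "T (max (Suc k) j) \<le> T (max k j)" for k
        using down[of k] by (cases "j \<le> k") (simp_all add: max_def)
    qed (use False in simp)
    then show ?thesis using False by (simp add: T_def)
  qed
qed

lemma pow_self_le_binomial:
  assumes "j \<le> n"
  shows "real n ^ n \<le> real (n + 1) * (real (n choose j) * real j ^ j * real (n - j) ^ (n - j))"
proof (cases "j = n")
  case False
  have "real n ^ n = (real j + real (n - j)) ^ n" using assms by simp
  also have "\<dots> = (\<Sum>i\<le>n. real (n choose i) * real j ^ i * real (n - j) ^ (n - i))"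
    by (simp add: binomial_ring)
  also have "\<dots> \<le> real (card {..n}) * (real (n choose j) * real j ^ j * real (n - j) ^ (n - j))"
    using False assms by (intro sum_bounded_above binomial_term_le_mode) simp
  finally show ?thesis by simp
qed (simp add: algebra_simps)

definition scaled_entropy :: "nat \<Rightarrow> nat \<Rightarrow> real \<Rightarrow> real" where
  "scaled_entropy q n y =
     y * ln (real q - 1) - y * ln y - (real n - y) * ln (real n - y) + real n * ln (real n)"

lemma scaled_entropy_eq:
  assumes "0 \<le> y" and "y < real n"
  shows "real n * entropy_ln q (y / real n) = scaled_entropy q n y"
proof (cases "y = 0")
  case False
  have n: "real n > 0" using assms by linarith
  have ln1: "ln (y / real n) = ln y - ln (real n)"
    using assms False n by (simp add: ln_div)
  have "1 - y / real n = (real n - y) / real n"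
    using n by (simp add: field_simps)
  then have ln2: "ln (1 - y / real n) = ln (real n - y) - ln (real n)"
    using assms n by (simp add: ln_div)
  show ?thesis
    unfolding entropy_ln_def ln1 ln2 using n by (simp add: scaled_entropy_def field_simps)
qed (simp add: entropy_ln_def scaled_entropy_def)

lemma ln_pow_self: "ln (real k ^ k) = real k * ln (real k)"
  by (cases "k = 0") (simp_all add: ln_realpow)

lemma scaled_entropy_le_ln_card_mismatches_eq:
  assumes "a < q" and "2 \<le> q" and "j \<le> n"
  shows "scaled_entropy q n (real j) - ln (real n + 1)
    \<le> ln (real (card {v \<in> words q n. mismatches a v = j}))"
proof -
  have pos: "0 < real (n choose j)" "0 < real j ^ j" "0 < real (n - j) ^ (n - j)" "0 < real q - 1"
    using assms by (auto simp del: of_nat_diff)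
  have "ln (real n ^ n) \<le>
      ln (real (n + 1) * (real (n choose j) * real j ^ j * real (n - j) ^ (n - j)))"
    using pow_self_le_binomial[OF assms(3)] pos by (intro ln_mono) auto
  then have "real n * ln (real n) \<le>
      ln (real n + 1) + ln (real (n choose j)) + real j * ln (real j)
        + real (n - j) * ln (real (n - j))"
    using pos by (simp add: ln_mult ln_pow_self add.commute del: of_nat_diff)
  moreover have "real (card {v \<in> words q n. mismatches a v = j}) =
      real (n choose j) * (real q - 1) ^ j"
    using assms by (simp add: card_words_mismatches_eq of_nat_diff)
  ultimately show ?thesis
    using assms(3) pos by (simp add: scaled_entropy_def ln_mult ln_realpow of_nat_diff)
qed

lemma xlnx_diff_le_one:
  fixes x y :: real
  assumes "0 \<le> x" and "x \<le> y" and "y \<le> x + 1"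
  shows "x * ln x - y * ln y \<le> 1"
proof (cases "x = y")
  case False
  define d where "d = y - x"
  have d: "0 < d" "d \<le> 1" "d \<le> y" using assms False by (auto simp: d_def)
  have "x * ln x \<le> x * ln y"
    using assms by (cases "x = 0") (auto intro: mult_left_mono)
  then have "x * ln x - y * ln y \<le> - (d * ln y)"
    by (simp add: d_def algebra_simps)
  also have "\<dots> \<le> - (d * ln d)"
    using d by (simp add: mult_left_mono)
  also have "\<dots> \<le> 1 - d"
    using ln_le_minus_one[of "1 / d"] d by (simp add: ln_div field_simps)
  finally show ?thesis using d by linarith
qed simp

lemma xlnx_diff_le_ln:
  fixes x y :: real
  assumes "0 < x" and "x \<le> y" and "y \<le> x + 1" and "1 \<le> y"
  shows "y * ln y - x * ln x \<le> 1 + ln y"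
proof -
  have "x * (ln y - ln x) \<le> y - x"
    using ln_le_minus_one[of "y / x"] assms by (simp add: ln_div field_simps)
  moreover have "(y - x) * ln y \<le> ln y"
    using assms by (simp add: mult_left_le_one_le)
  ultimately show ?thesis
    using assms by (simp add: algebra_simps)
qed

lemma scaled_entropy_diff_floor:
  assumes "2 \<le> q" and "real j \<le> y" and "y < real j + 1" and "y < real n"
  shows "scaled_entropy q n y - scaled_entropy q n (real j) \<le> ln (real q - 1) + 2 + ln (real n)"
proof -
  have "j < n" using assms by linarith
  have "(y - real j) * ln (real q - 1) \<le> ln (real q - 1)"
    using assms by (simp add: mult_left_le_one_le)
  moreover have "real j * ln (real j) - y * ln y \<le> 1"
    using assms by (intro xlnx_diff_le_one) auto
  moreover have "(real n - real j) * ln (real n - real j) - (real n - y) * ln (real n - y)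
      \<le> 1 + ln (real n - real j)"
    using assms \<open>j < n\<close> by (intro xlnx_diff_le_ln) auto
  moreover have "ln (real n - real j) \<le> ln (real n)"
    using \<open>j < n\<close> by simp
  ultimately show ?thesis
    by (simp add: scaled_entropy_def algebra_simps)
qed

lemma less_of_le_q_fraction:
  assumes "2 \<le> q" and "y \<le> (real q - 1) / real q * real n" and "0 < n"
  shows "y < real n"
proof -
  have "(real q - 1) / real q * real n < 1 * real n"
    using assms by (intro mult_strict_right_mono) simp_all
  with assms(2) show ?thesis by simp
qed

lemma ln_card_mismatches_le_approx:
  assumes "a < q" and "2 \<le> q" and "0 < n" and "0 \<le> y" and "y \<le> (real q - 1) / real q * real n"
  shows "0 < card {v \<in> words q n. real (mismatches a v) \<le> y}"
    and "\<bar>ln (real (card {v \<in> words q n. real (mismatches a v) \<le> y})) - scaled_entropy q n y\<bar>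
      \<le> ln (real q - 1) + 2 + ln (real n) + ln (real n + 1)"
proof -
  define S where "S = {v \<in> words q n. real (mismatches a v) \<le> y}"
  define j where "j = nat \<lfloor>y\<rfloor>"
  have "y < real n"
    using assms(2,5,3) by (rule less_of_le_q_fraction)
  have j: "real j \<le> y" "y < real j + 1" "j \<le> n"
    using assms(4) \<open>y < real n\<close> by (auto simp: j_def) linarith+
  have "{v \<in> words q n. mismatches a v = j} \<subseteq> S"
    using j by (auto simp: S_def)
  then have card_ge: "card {v \<in> words q n. mismatches a v = j} \<le> card S"
    by (intro card_mono) (simp_all add: S_def finite_words)
  have card_pos: "0 < card {v \<in> words q n. mismatches a v = j}"
    using assms(1,2) j by (simp add: card_words_mismatches_eq)
  with card_ge have "0 < card S" by linarith
  then show "0 < card {v \<in> words q n. real (mismatches a v) \<le> y}" by (simp add: S_def)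
  have "real (card S) \<le> exp (real n * entropy_ln q (y / real n))"
    using card_mismatches_le_entropy[OF assms(1,2), of "y / real n" n] assms(3-5)
    by (simp add: S_def field_simps)
  then have "ln (real (card S)) \<le> real n * entropy_ln q (y / real n)"
    using \<open>0 < card S\<close> by (metis ln_exp ln_mono of_nat_0_less_iff)
  then have upper: "ln (real (card S)) \<le> scaled_entropy q n y"
    using scaled_entropy_eq[OF assms(4) \<open>y < real n\<close>] by simp
  have "ln (real (card {v \<in> words q n. mismatches a v = j})) \<le> ln (real (card S))"
    using card_ge card_pos by simp
  then have "scaled_entropy q n (real j) - ln (real n + 1) \<le> ln (real (card S))"
    using scaled_entropy_le_ln_card_mismatches_eq[OF assms(1,2) j(3)] by linarith
  with scaled_entropy_diff_floor[OF assms(2) j(1,2) \<open>y < real n\<close>] upper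
  show "\<bar>ln (real (card {v \<in> words q n. real (mismatches a v) \<le> y})) - scaled_entropy q n y\<bar>
      \<le> ln (real q - 1) + 2 + ln (real n) + ln (real n + 1)"
    by (simp add: S_def)
qed

lemma powr_exponent_error:
  fixes b c t h B :: real
  assumes "0 < c" and "1 < b" and "0 < t" and "\<bar>ln c - t * h * ln b\<bar> \<le> B"
  shows "\<exists>e. \<bar>e\<bar> \<le> B / (t * ln b) \<and> c = b powr (t * (h + e))"
proof
  define e where "e = ln c / (t * ln b) - h"
  have "ln b > 0" using assms(2) by simp
  have "e = (ln c - t * h * ln b) / (t * ln b)"
    using assms(3) \<open>ln b > 0\<close> by (simp add: e_def field_simps)
  then have "\<bar>e\<bar> \<le> B / (t * ln b)"
    using assms(3,4) \<open>ln b > 0\<close> by (simp add: abs_div divide_right_mono)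
  moreover have "b powr (t * (h + e)) = c"
    using assms \<open>ln b > 0\<close> by (simp add: e_def powr_def)
  ultimately show "\<bar>e\<bar> \<le> B / (t * ln b) \<and> c = b powr (t * (h + e))" by simp
qed

lemma error_term_le_mult_ln:
  fixes L :: real
  assumes "2 \<le> n" and "0 \<le> L"
  shows "L + 2 + ln (real n) + ln (real n + 1) \<le> (3 + (2 + L) / ln 2) * ln (real n)"
proof -
  have "2 \<le> real n" using assms(1) by simp
  moreover from this have "real n * 2 \<le> real n * real n"
    by (intro mult_left_mono) simp_all
  ultimately have "real n + 1 \<le> real n ^ 2"
    unfolding power2_eq_square by linarith
  then have "ln (real n + 1) \<le> ln (real n ^ 2)"
    by (intro ln_mono) simp_all
  then have "ln (real n + 1) \<le> 2 * ln (real n)"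
    using assms(1) by (simp add: ln_realpow)
  moreover have "(2 + L) * 1 \<le> (2 + L) * (ln (real n) / ln 2)"
    using assms by (intro mult_left_mono) simp_all
  ultimately show ?thesis by (simp add: algebra_simps)
qed

lemma card_mismatches_le_powr_Hq:
  assumes "a < q" and "2 \<le> q" and "2 \<le> n" and "0 \<le> y" and "y \<le> (real q - 1) / real q * real n"
  shows "\<exists>e. \<bar>e\<bar> \<le> (3 + (2 + ln (real q - 1)) / ln 2) * log (real q) (real n) / real n \<and>
    real (card {v \<in> words q n. real (mismatches a v) \<le> y}) =
      real q powr (real n * (Hq q (y / real n) + e))"
proof -
  let ?S = "{v \<in> words q n. real (mismatches a v) \<le> y}"
  define C where "C = 3 + (2 + ln (real q - 1)) / ln 2"
  define B where "B = ln (real q - 1) + 2 + ln (real n) + ln (real n + 1)"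
  have "0 < n" "1 < real q" using assms(2,3) by simp_all
  have "y < real n"
    using assms(2,5) \<open>0 < n\<close> by (rule less_of_le_q_fraction)
  have "real n * Hq q (y / real n) * ln (real q) = scaled_entropy q n y"
    using scaled_entropy_eq[OF assms(4) \<open>y < real n\<close>] \<open>1 < real q\<close> \<open>y < real n\<close>
    by (simp add: Hq_eq_entropy_ln)
  then have bound: "\<bar>ln (real (card ?S)) - real n * Hq q (y / real n) * ln (real q)\<bar> \<le> B"
    using ln_card_mismatches_le_approx(2)[OF assms(1,2) \<open>0 < n\<close> assms(4,5)] by (simp add: B_def)
  have "0 < real (card ?S)"
    using ln_card_mismatches_le_approx(1)[OF assms(1,2) \<open>0 < n\<close> assms(4,5)] by simp
  then obtain e where e: "\<bar>e\<bar> \<le> B / (real n * ln (real q))"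
    and card: "real (card ?S) = real q powr (real n * (Hq q (y / real n) + e))"
    using powr_exponent_error[OF _ \<open>1 < real q\<close> _ bound] \<open>0 < n\<close> by auto
  have "B \<le> C * ln (real n)"
    unfolding B_def C_def using assms(2,3) by (intro error_term_le_mult_ln) simp_all
  then have "B / (real n * ln (real q)) \<le> C * ln (real n) / (real n * ln (real q))"
    using \<open>0 < n\<close> \<open>1 < real q\<close> by (intro divide_right_mono) simp_all
  also have "\<dots> = C * log (real q) (real n) / real n"
    by (simp add: log_def)
  finally have "\<bar>e\<bar> \<le> C * log (real q) (real n) / real n"
    using e by linarith
  with card show ?thesis unfolding C_def by blast
qed

theorem mainTheorem14:
  fixes q :: nat and \<tau> :: real
  assumes "q \<ge> 2" and "\<tau> \<ge> 0"
  shows "\<exists>C N. \<forall>(n::nat) (m::nat) r.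
     n \<ge> N \<and> n \<ge> 1 \<and> real n - \<tau> * real n \<le> real m \<and> real m \<le> real n + \<tau> * real n \<and>
     r \<in> const_words q m \<and>
     (\<tau> * real n + real n - real m) / (2 * real n) \<le> (real q - 1) / real q \<longrightarrow>
     (\<exists>e. \<bar>e\<bar> \<le> C * log (real q) (real n) / real n \<and>
        real (card (insdel_ball q r (\<tau> * real n) \<inter> words q n)) =
          real q powr (real n * (Hq q ((\<tau> * real n + real n - real m) / (2 * real n)) + e)))"
proof (rule exI[of _ "3 + (2 + ln (real q - 1)) / ln 2"], rule exI[of _ 2],
    intro allI impI, elim conjE)
  fix n m :: nat and r
  assume n: "2 \<le> n" and "1 \<le> n"
    and m: "real n - \<tau> * real n \<le> real m" "real m \<le> real n + \<tau> * real n"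
    and r: "r \<in> const_words q m"
    and \<kappa>: "(\<tau> * real n + real n - real m) / (2 * real n) \<le> (real q - 1) / real q"
  obtain a where "a < q" and "r = replicate m a"
    using r by (auto simp: const_words_def)
  define y where "y = (\<tau> * real n + real n - real m) / 2"
  have "(\<tau> * real n + real n - real m) / (2 * real n) = y / real n"
    by (simp add: y_def)
  moreover have "insdel_ball q r (\<tau> * real n) \<inter> words q n =
      {v \<in> words q n. real (mismatches a v) \<le> y}"
    using insdel_ball_replicate_inter_words[OF m] \<open>r = replicate m a\<close> by (auto simp: y_def)
  moreover have "0 \<le> y" "y \<le> (real q - 1) / real q * real n"
    using m \<kappa> n \<open>\<tau> \<ge> 0\<close> by (auto simp: y_def field_simps)
  ultimately show "\<exists>e. \<bar>e\<bar> \<le> (3 + (2 + ln (real q - 1)) / ln 2) * log (real q) (real n) / real n \<and>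
      real (card (insdel_ball q r (\<tau> * real n) \<inter> words q n)) =
        real q powr (real n * (Hq q ((\<tau> * real n + real n - real m) / (2 * real n)) + e))"
    using card_mismatches_le_powr_Hq[OF \<open>a < q\<close> assms(1) n] by simp
qed

end
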